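(* Let $f_0:\mathbb{T}\times\mathbb{R}\to\mathbb{T}\times\mathbb{R}$ be the map $(\psi,w)\mapsto(\psi_1,w_1)$ with $\psi_1=\psi+w$, $w_1=w+2\pi(\cos\psi_1-1)$ (i.e. $f_\mu$ with $\mu=0$). Then the fixed point $(0,0)$ is locally unstable under $f_0$.
   Context: $\mathbb{T}=\mathbb{R}/2\pi\mathbb{Z}$. A fixed point $p_{\rm s}$ is locally stable if for every $\epsilon>0$ there exists $\delta>0$ such that $\|p-p_{\rm s}\|<\delta$ implies $\|f^n(p)-p_{\rm s}\|<\epsilon$ for all $n\in\mathbb{Z}$; otherwise it is locally unstable. *)

theory Defs
  imports Complex_Main
begin

text \<open>Points of T x R are represented by lifts (psi, w) in R x R; psi is read modulo 2 pi.
  The map is well defined on T x R since cos is 2 pi periodic.\<close>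

definition f0 :: "real \<times> real \<Rightarrow> real \<times> real" where
  "f0 p = (let psi1 = fst p + snd p in (psi1, snd p + 2 * pi * (cos psi1 - 1)))"

definition f0_inv :: "real \<times> real \<Rightarrow> real \<times> real" where
  "f0_inv q = (let w = snd q - 2 * pi * (cos (fst q) - 1) in (fst q - w, w))"

definition f0_iter :: "int \<Rightarrow> real \<times> real \<Rightarrow> real \<times> real" where
  "f0_iter n = (if 0 \<le> n then f0 ^^ nat n else f0_inv ^^ nat (- n))"

definition tdist0 :: "real \<Rightarrow> real" where
  "tdist0 x = (INF k::int. \<bar>x - 2 * pi * of_int k\<bar>)"

definition pnorm :: "real \<times> real \<Rightarrow> real" where
  "pnorm p = sqrt ((tdist0 (fst p))\<^sup>2 + (snd p)\<^sup>2)"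

definition locally_stable_f0 :: "real \<times> real \<Rightarrow> bool" where
  "locally_stable_f0 ps \<longleftrightarrow>
     (\<forall>\<epsilon>>0. \<exists>\<delta>>0. \<forall>p. pnorm (fst p - fst ps, snd p - snd ps) < \<delta> \<longrightarrow>
        (\<forall>n::int. pnorm (fst (f0_iter n p) - fst ps, snd (f0_iter n p) - snd ps) < \<epsilon>))"

end

theory Submission
  imports Defs
begin

text \<open>Starting at \<open>(0, -\<delta>)\<close>, the velocity \<open>w\<close> never increases because \<open>cos \<psi> - 1 \<le> 0\<close>,
  so the angle lift \<open>\<psi>\<close> decreases by at least \<open>\<delta>\<close> per step and tends to \<open>-\<infinity>\<close>. An orbit
  staying in the unit ball has steps \<open>|w| < 1\<close>, so the lift cannot jump over \<open>[-2, -1]\<close>;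
  but every angle there is at distance \<open>\<ge> 1\<close> from \<open>0\<close> on the circle.\<close>

lemma tdist0_0 [simp]: "tdist0 0 = 0"
proof -
  have "bdd_below (range (\<lambda>k::int. \<bar>0 - 2 * pi * of_int k\<bar>))"
    by (rule bdd_belowI[of _ 0]) auto
  then have "tdist0 0 \<le> \<bar>0 - 2 * pi * of_int (0::int)\<bar>"
    unfolding tdist0_def by (rule cINF_lower) simp
  moreover have "0 \<le> tdist0 0"
    unfolding tdist0_def by (rule cINF_greatest) auto
  ultimately show ?thesis by simp
qed

lemma tdist0_ge_1:
  assumes "1 - 2 * pi \<le> x" and "x \<le> -1"
  shows "1 \<le> tdist0 x"
  unfolding tdist0_def
proof (rule cINF_greatest)
  fix k :: int
  show "1 \<le> \<bar>x - 2 * pi * of_int k\<bar>"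
  proof (cases "k \<ge> 0")
    case True
    then have "0 \<le> 2 * pi * of_int k" by simp
    then show ?thesis using assms by linarith
  next
    case False
    then have "2 * pi * of_int k \<le> 2 * pi * (-1)"
      by (intro mult_left_mono) auto
    then show ?thesis using assms by linarith
  qed
qed simp

lemma tdist0_le_pnorm: "tdist0 (fst p) \<le> pnorm p"
  unfolding pnorm_def by (simp add: real_sqrt_sum_squares_ge1)

lemma abs_snd_le_pnorm: "\<bar>snd p\<bar> \<le> pnorm p"
  unfolding pnorm_def by (simp add: real_sqrt_sum_squares_ge2)

text \<open>The first value below \<open>-1\<close> would lie in \<open>(-2, -1)\<close>, where the circle distance
  to \<open>0\<close> is at least \<open>1\<close>.\<close>
lemma tdist0_barrier:
  fixes x :: "nat \<Rightarrow> real"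
  assumes "-1 \<le> x 0"
    and steps: "\<And>m. x m - 1 < x (Suc m)"
    and near: "\<And>m. tdist0 (x m) < 1"
  shows "-1 \<le> x m"
proof (induction m)
  case 0
  show ?case using assms(1) .
next
  case (Suc m)
  show ?case
  proof (rule ccontr)
    assume "\<not> -1 \<le> x (Suc m)"
    moreover have "1 - 2 * pi \<le> x (Suc m)"
      using Suc steps[of m] pi_ge_two by linarith
    ultimately have "1 \<le> tdist0 (x (Suc m))"
      by (intro tdist0_ge_1) auto
    with near[of "Suc m"] show False by simp
  qed
qed

lemma f0_pair [simp]: "f0 (a, b) = (a + b, b + 2 * pi * (cos (a + b) - 1))"
  unfolding f0_def Let_def by simp

lemma f0_fst: "fst (f0 p) = fst p + snd p"
  by (cases p) simp

lemma f0_snd_le: "snd (f0 p) \<le> snd p"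
  by (cases p) (simp add: mult_nonneg_nonpos)

lemma f0_iter_of_nat: "f0_iter (int m) = f0 ^^ m"
  unfolding f0_iter_def by simp

lemma funpow_f0_snd_le: "snd ((f0 ^^ m) p) \<le> snd p"
proof (induction m)
  case (Suc m)
  show ?case using f0_snd_le[of "(f0 ^^ m) p"] Suc by simp
qed simp

lemma funpow_f0_fst_le: "fst ((f0 ^^ m) p) \<le> fst p + real m * snd p"
proof (induction m)
  case 0
  show ?case by simp
next
  case (Suc m)
  have "fst ((f0 ^^ Suc m) p) = fst ((f0 ^^ m) p) + snd ((f0 ^^ m) p)"
    by (simp add: f0_fst)
  also have "\<dots> \<le> fst p + real (Suc m) * snd p"
    using Suc funpow_f0_snd_le[of m p] by (simp add: algebra_simps)
  finally show ?case .
qed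

lemma f0_orbit_leaves_unit_ball:
  assumes "\<delta> > 0"
  shows "\<exists>m. 1 \<le> pnorm ((f0 ^^ m) (0, -\<delta>))"
proof (rule ccontr)
  define x where "x m = fst ((f0 ^^ m) (0, -\<delta>))" for m
  assume "\<not> ?thesis"
  then have inside: "pnorm ((f0 ^^ m) (0, -\<delta>)) < 1" for m
    by (simp add: not_le)
  have steps: "x m - 1 < x (Suc m)" for m
  proof -
    have "\<bar>snd ((f0 ^^ m) (0, -\<delta>))\<bar> < 1"
      using abs_snd_le_pnorm inside[of m] by (rule le_less_trans)
    then show ?thesis
      unfolding x_def funpow.simps o_apply f0_fst by linarith
  qed
  have near: "tdist0 (x m) < 1" for m
    using tdist0_le_pnorm inside[of m] unfolding x_def by (rule le_less_trans)
  have "-1 \<le> x 0"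
    by (simp add: x_def)
  then have barrier: "-1 \<le> x m" for m
    using steps near by (rule tdist0_barrier)
  obtain m :: nat where "1 / \<delta> < real m"
    using reals_Archimedean2 by blast
  then have "1 < real m * \<delta>"
    using assms by (simp add: field_simps)
  moreover have "x m \<le> - real m * \<delta>"
    using funpow_f0_fst_le[of m "(0, -\<delta>)"] by (simp add: x_def)
  ultimately show False
    using barrier[of m] by linarith
qed

theorem mainTheorem2:
  shows "f0 (0, 0) = (0, 0) \<and> \<not> locally_stable_f0 (0, 0)"
proof
  show "f0 (0, 0) = (0, 0)" by simp
next
  show "\<not> locally_stable_f0 (0, 0)"
  proof
    assume "locally_stable_f0 (0, 0)"
    then have "\<exists>\<delta>>0. \<forall>p. pnorm p < \<delta> \<longrightarrow> (\<forall>n. pnorm (f0_iter n p) < 1)"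
      unfolding locally_stable_f0_def
      by (simp only: fst_conv snd_conv diff_zero prod.collapse)
    then obtain \<delta> where "\<delta> > 0"
      and stable: "\<And>p n. pnorm p < \<delta> \<Longrightarrow> pnorm (f0_iter n p) < 1"
      by blast
    obtain m where "1 \<le> pnorm ((f0 ^^ m) (0, -(\<delta> / 2)))"
      using f0_orbit_leaves_unit_ball[of "\<delta> / 2"] \<open>\<delta> > 0\<close> by auto
    moreover have "pnorm (f0_iter (int m) (0, -(\<delta> / 2))) < 1"
      using \<open>\<delta> > 0\<close> by (intro stable) (simp add: pnorm_def)
    ultimately show False
      by (simp add: f0_iter_of_nat)
  qed
qed

end
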